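(* Fix $j$ with $\ell+1\le j\le n$, a nonzero linear form $\alpha_j=\sum_{i=1}^{\ell}a_{ji}x_i\in S=\mathbb{K}[x_1,\dots,x_\ell]$. Let $M_j\subseteq S^\ell$ be the $S$-module of all tuples $(k_1,\dots,k_\ell)\in S^\ell$ for which there exists $k_j\in S$ with $$k_j\,\alpha_j=\sum_{i=1}^{\ell}k_i\,a_{ji}x_i .$$ Then $M_j$ is generated as an $S$-module by the set $$G_j=\{e\}\cup\{e_r : a_{jr}=0\}\cup\{a_{jt}x_t\,e_s-a_{js}x_s\,e_t : a_{jt}a_{js}\neq 0\},$$ where $e=(1,1,\dots,1)$ and $e_r$ is the $r$-th standard basis vector of $S^\ell$.
   Context: This is the $j$-th equation of the system $k_j\alpha_j=\sum_{i=1}^\ell k_i(a_{ji}x_i)$, $\ell+1\le j\le n$, arising (via Theorem 2.1 / Corollary 2.2 of the paper) for an arrangement with canonical defining polynomial $Q=x_1\cdots x_\ell\,\alpha_{\ell+1}\cdots\alpha_n$, where $\theta(x_i)=k_ix_i$ and $\theta(\alpha_j)=k_j\alpha_j$ for a logarithmic derivation $\theta$. *)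

theory Defs
  imports "HOL-Library.Poly_Mapping"
begin

text \<open>Multivariate polynomials over a field K, represented as finitely supported maps
from monomials (exponent vectors, nat =>0 nat) to coefficients.
The ring S = K[x_1,...,x_l] is the subset of polynomials only involving the variables 1..l.\<close>

type_synonym 'a mpol = "(nat \<Rightarrow>\<^sub>0 nat) \<Rightarrow>\<^sub>0 'a"

definition Var :: "nat \<Rightarrow> 'a::field mpol" where
  "Var i = Poly_Mapping.single (Poly_Mapping.single i 1) 1"

definition Const :: "'a::field \<Rightarrow> 'a mpol" where
  "Const c = Poly_Mapping.single 0 c"

definition inS :: "nat \<Rightarrow> 'a::field mpol \<Rightarrow> bool" where
  "inS l p \<longleftrightarrow> (\<forall>m \<in> Poly_Mapping.keys p. Poly_Mapping.keys m \<subseteq> {1..l})"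

text \<open>elements of S^l, as functions on indices 1..l (zero elsewhere)\<close>
definition inSl :: "nat \<Rightarrow> (nat \<Rightarrow> 'a::field mpol) \<Rightarrow> bool" where
  "inSl l v \<longleftrightarrow> (\<forall>i\<in>{1..l}. inS l (v i)) \<and> (\<forall>i. i \<notin> {1..l} \<longrightarrow> v i = 0)"

definition lin_form :: "nat \<Rightarrow> (nat \<Rightarrow> 'a::field) \<Rightarrow> 'a mpol" where
  "lin_form l a = (\<Sum>i=1..l. Const (a i) * Var i)"

definition Mmod :: "nat \<Rightarrow> (nat \<Rightarrow> 'a::field) \<Rightarrow> (nat \<Rightarrow> 'a mpol) set" where
  "Mmod l a = {v. inSl l v \<and>
     (\<exists>kj. inS l kj \<and> kj * lin_form l a = (\<Sum>i=1..l. v i * (Const (a i) * Var i)))}"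

definition e_all :: "nat \<Rightarrow> nat \<Rightarrow> 'a::field mpol" where
  "e_all l = (\<lambda>i. if i \<in> {1..l} then 1 else 0)"

definition e_std :: "nat \<Rightarrow> nat \<Rightarrow> 'a::field mpol" where
  "e_std r = (\<lambda>i. if i = r then 1 else 0)"

definition Gset :: "nat \<Rightarrow> (nat \<Rightarrow> 'a::field) \<Rightarrow> (nat \<Rightarrow> 'a mpol) set" where
  "Gset l a = {e_all l} \<union> {e_std r | r. r \<in> {1..l} \<and> a r = 0}
     \<union> {(\<lambda>i. (Const (a t) * Var t) * e_std s i - (Const (a s) * Var s) * e_std t i) | s t.
          s \<in> {1..l} \<and> t \<in> {1..l} \<and> a t * a s \<noteq> 0}"

definition S_span :: "nat \<Rightarrow> (nat \<Rightarrow> 'a::field mpol) set \<Rightarrow> (nat \<Rightarrow> 'a mpol) set" where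
  "S_span l G = {v. \<exists>F c. finite F \<and> F \<subseteq> G \<and> (\<forall>g\<in>F. inS l (c g)) \<and>
                        v = (\<lambda>i. \<Sum>g\<in>F. c g * g i)}"

end

theory Submission
  imports Defs
begin

text \<open>Subtracting \<open>k\<^sub>j e\<close> and suitable multiples of the \<open>e\<^sub>r\<close> with \<open>a\<^sub>j\<^sub>r = 0\<close>
  turns an element of \<open>M\<^sub>j\<close> into a syzygy of the monomials \<open>a\<^sub>j\<^sub>i x\<^sub>i\<close> with
  \<open>a\<^sub>j\<^sub>i \<noteq> 0\<close>, which live in pairwise distinct variables. Such syzygies are generated
  by the Koszul syzygies \<open>a\<^sub>j\<^sub>t x\<^sub>t e\<^sub>s - a\<^sub>j\<^sub>s x\<^sub>s e\<^sub>t\<close>: dividing the other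
  coordinates by \<open>x\<^sub>t\<close> with remainder and subtracting Koszul syzygies makes them free
  of \<open>x\<^sub>t\<close>, after which the relation forces the \<open>t\<close>-th coordinate to vanish, and
  induction on the support finishes the proof.\<close>

definition vars :: "'a::zero mpol \<Rightarrow> nat set" where
  "vars p = (\<Union>m\<in>Poly_Mapping.keys p. Poly_Mapping.keys m)"

lemma keys_add_monomial:
  "Poly_Mapping.keys (m1 + m2 :: nat \<Rightarrow>\<^sub>0 nat) = Poly_Mapping.keys m1 \<union> Poly_Mapping.keys m2"
  by (auto simp: in_keys_iff lookup_add)

lemma inS_iff_vars: "inS l p \<longleftrightarrow> vars p \<subseteq> {1..l}"
  by (auto simp: inS_def vars_def)

lemma vars_zero [simp]: "vars 0 = {}"
  by (simp add: vars_def)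

lemma vars_single: "b \<noteq> 0 \<Longrightarrow> vars (Poly_Mapping.single m b) = Poly_Mapping.keys m"
  by (simp add: vars_def)

lemma vars_Const [simp]: "vars (Const c) = {}"
  by (simp add: vars_def Const_def)

lemma vars_Var: "vars (Var i :: 'a::field mpol) = {i}"
  by (simp add: vars_def Var_def)

lemma vars_add: "vars (p + q) \<subseteq> vars p \<union> vars q"
  unfolding vars_def using keys_add[of p q] by blast

lemma vars_diff: "vars (p - q) \<subseteq> vars p \<union> vars q"
  unfolding vars_def using keys_diff[of p q] by blast

lemma vars_mult: "vars (p * q) \<subseteq> vars p \<union> vars q"
  unfolding vars_def using keys_mult[of p q] by (fastforce simp: keys_add_monomial)

lemma vars_sum: "vars (\<Sum>x\<in>A. f x) \<subseteq> (\<Union>x\<in>A. vars (f x))"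
  unfolding vars_def using keys_sum[of f A] by blast

lemma inS_add: "inS l p \<Longrightarrow> inS l q \<Longrightarrow> inS l (p + q)"
  using vars_add[of p q] by (auto simp: inS_iff_vars)

lemma inS_diff: "inS l p \<Longrightarrow> inS l q \<Longrightarrow> inS l (p - q)"
  using vars_diff[of p q] by (auto simp: inS_iff_vars)

lemma inS_mult: "inS l p \<Longrightarrow> inS l q \<Longrightarrow> inS l (p * q)"
  using vars_mult[of p q] by (auto simp: inS_iff_vars)

lemma inS_sum: "(\<And>x. x \<in> A \<Longrightarrow> inS l (f x)) \<Longrightarrow> inS l (\<Sum>x\<in>A. f x)"
  using vars_sum[of f A] by (force simp: inS_iff_vars)

lemma inS_zero [simp]: "inS l 0"
  by (simp add: inS_iff_vars)

lemma inS_one [simp]: "inS l 1"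
  by (simp add: inS_def)

lemma inS_Const [simp]: "inS l (Const c)"
  by (simp add: inS_iff_vars)

lemma inS_Var: "i \<in> {1..l} \<Longrightarrow> inS l (Var i)"
  by (simp add: inS_iff_vars vars_Var)

section \<open>Division by a variable\<close>

lemma Const_mult: "Const c * Const d = Const (c * d)"
  by (simp add: Const_def mult_single)

lemma single_eq_Var_mult:
  assumes "t \<in> Poly_Mapping.keys m"
  shows "Poly_Mapping.single m b =
    (Var t :: 'a::field mpol) * Poly_Mapping.single (m - Poly_Mapping.single t 1) b"
proof -
  have "Poly_Mapping.single t 1 + (m - Poly_Mapping.single t 1) = m"
    using assms by (intro poly_mapping_eqI)
      (auto simp: lookup_add lookup_minus lookup_single when_def in_keys_iff)
  then show ?thesis
    by (simp add: Var_def mult_single)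
qed

lemma update_eq_single_plus:
  "a \<notin> Poly_Mapping.keys f \<Longrightarrow> Poly_Mapping.update a b f = Poly_Mapping.single a b + f"
  by (intro poly_mapping_eqI) (auto simp: lookup_update lookup_add lookup_single when_def in_keys_iff)

lemma Var_division:
  fixes p :: "'a::field mpol"
  assumes "vars p \<subseteq> V"
  obtains q r where "p = Var t * q + r" "vars q \<subseteq> V" "vars r \<subseteq> V - {t}"
proof -
  have "vars p \<subseteq> V \<Longrightarrow> \<exists>q r. p = Var t * q + r \<and> vars q \<subseteq> V \<and> vars r \<subseteq> V - {t}"
  proof (induction p rule: update_induct)
    case const
    show ?case by (intro exI[of _ 0]) simp
  next
    case (update f m b)
    note upd = update_eq_single_plus[OF update.hyps(1)]
    have "vars (Poly_Mapping.update m b f) = Poly_Mapping.keys m \<union> vars f"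
      using update.hyps(2) by (auto simp: vars_def keys_update)
    then have m: "Poly_Mapping.keys m \<subseteq> V" and "vars f \<subseteq> V"
      using update.prems by auto
    then obtain q r where qr: "f = Var t * q + r" "vars q \<subseteq> V" "vars r \<subseteq> V - {t}"
      using update.IH by blast
    show ?case
    proof (cases "t \<in> Poly_Mapping.keys m")
      case True
      let ?q = "Poly_Mapping.single (m - Poly_Mapping.single t 1) b + q"
      have "Poly_Mapping.keys (m - Poly_Mapping.single t 1) \<subseteq> Poly_Mapping.keys m"
        by (auto simp: in_keys_iff lookup_minus)
      then have "vars ?q \<subseteq> V"
        using vars_add vars_single[OF update.hyps(2)] m qr(2) by blast
      moreover have "Poly_Mapping.update m b f = Var t * ?q + r"
        unfolding upd single_eq_Var_mult[OF True] by (simp add: qr(1) algebra_simps)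
      ultimately show ?thesis using qr(3) by blast
    next
      case False
      let ?r = "Poly_Mapping.single m b + r"
      have "vars ?r \<subseteq> V - {t}"
        using vars_add vars_single[OF update.hyps(2)] m False qr(3) by blast
      moreover have "Poly_Mapping.update m b f = Var t * q + ?r"
        unfolding upd by (simp add: qr(1) algebra_simps)
      ultimately show ?thesis using qr(2) by blast
    qed
  qed
  with assms that show ?thesis by blast
qed

lemma eq_zero_if_free_plus_Var_multiple:
  fixes f g :: "'a::field mpol"
  assumes "t \<notin> vars f" and "f + g * Var t = 0"
  shows "f = 0"
proof -
  have "t \<in> Poly_Mapping.keys m" if "m \<in> Poly_Mapping.keys (g * Var t)" for m
    using keys_mult[of g "Var t"] that by (auto simp: Var_def keys_add_monomial)
  moreover have "Poly_Mapping.keys f = Poly_Mapping.keys (g * Var t)"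
    using assms(2) by (metis add_eq_0_iff keys_minus)
  ultimately have "Poly_Mapping.keys f = {}"
    using assms(1) by (auto simp: vars_def)
  then show ?thesis by simp
qed

definition lin_term :: "(nat \<Rightarrow> 'a::field) \<Rightarrow> nat \<Rightarrow> 'a mpol" where
  "lin_term a i = Const (a i) * Var i"

definition lin_comb :: "(nat \<Rightarrow> 'a::field) \<Rightarrow> nat set \<Rightarrow> (nat \<Rightarrow> 'a mpol) \<Rightarrow> 'a mpol" where
  "lin_comb a I v = (\<Sum>i\<in>I. v i * lin_term a i)"

definition koszul :: "(nat \<Rightarrow> 'a::field) \<Rightarrow> nat \<Rightarrow> nat \<Rightarrow> nat \<Rightarrow> 'a mpol" where
  "koszul a s t = (\<lambda>i. lin_term a t * e_std s i - lin_term a s * e_std t i)"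

lemma lin_term_nonzero:
  assumes "a i \<noteq> 0" shows "lin_term a i \<noteq> 0"
proof -
  have "lin_term a i = Poly_Mapping.single (Poly_Mapping.single i 1) (a i)"
    by (simp add: lin_term_def Const_def Var_def mult_single)
  with assms show ?thesis by (metis lookup_single_eq lookup_zero)
qed

lemma lin_term_zero: "a i = 0 \<Longrightarrow> lin_term a i = 0"
  by (simp add: lin_term_def Const_def)

lemma vars_lin_term: "vars (lin_term a i) \<subseteq> {i}"
  using vars_mult[of "Const (a i)" "Var i"] by (simp add: lin_term_def vars_Var)

lemma inS_lin_term: "i \<in> {1..l} \<Longrightarrow> inS l (lin_term a i)"
  by (simp add: lin_term_def inS_mult inS_Var)

lemma lin_comb_add: "lin_comb a I (\<lambda>i. u i + v i) = lin_comb a I u + lin_comb a I v"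
  by (simp add: lin_comb_def sum.distrib distrib_right)

lemma lin_comb_diff: "lin_comb a I (\<lambda>i. u i - v i) = lin_comb a I u - lin_comb a I v"
  by (simp add: lin_comb_def sum_subtractf left_diff_distrib)

lemma lin_comb_smult: "lin_comb a I (\<lambda>i. c * v i) = c * lin_comb a I v"
  by (simp add: lin_comb_def sum_distrib_left mult.assoc)

lemma lin_comb_sum: "lin_comb a I (\<lambda>i. \<Sum>x\<in>A. f x i) = (\<Sum>x\<in>A. lin_comb a I (f x))"
  by (simp add: lin_comb_def sum_distrib_right sum.swap[of _ A])

lemma lin_comb_e_std: "finite I \<Longrightarrow> r \<in> I \<Longrightarrow> lin_comb a I (e_std r) = lin_term a r"
  by (simp add: lin_comb_def e_std_def if_distrib[of "\<lambda>x. x * _"] cong: if_cong)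

lemma lin_comb_koszul:
  "finite I \<Longrightarrow> s \<in> I \<Longrightarrow> t \<in> I \<Longrightarrow> lin_comb a I (koszul a s t) = 0"
  unfolding koszul_def lin_comb_diff lin_comb_smult by (simp add: lin_comb_e_std)

lemma lin_comb_insert:
  "finite I \<Longrightarrow> t \<notin> I \<Longrightarrow> lin_comb a (insert t I) v = lin_comb a I v + v t * lin_term a t"
  by (simp add: lin_comb_def)

lemma lin_comb_cong: "(\<And>i. i \<in> I \<Longrightarrow> u i = v i) \<Longrightarrow> lin_comb a I u = lin_comb a I v"
  by (simp add: lin_comb_def)

lemma inS_koszul: "s \<in> {1..l} \<Longrightarrow> t \<in> {1..l} \<Longrightarrow> inS l (koszul a s t i)"
  by (simp add: koszul_def e_std_def inS_lin_term inS_diff)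

lemma e_all_in_Gset: "e_all l \<in> Gset l a"
  by (simp add: Gset_def)

lemma e_std_in_Gset: "r \<in> {1..l} \<Longrightarrow> a r = 0 \<Longrightarrow> e_std r \<in> Gset l a"
  unfolding Gset_def by blast

lemma koszul_in_Gset:
  "s \<in> {1..l} \<Longrightarrow> t \<in> {1..l} \<Longrightarrow> a t * a s \<noteq> 0 \<Longrightarrow> koszul a s t \<in> Gset l a"
  unfolding Gset_def koszul_def lin_term_def by blast

lemma Mmod_iff:
  "v \<in> Mmod l a \<longleftrightarrow>
     inSl l v \<and> (\<exists>k. inS l k \<and> k * lin_comb a {1..l} (\<lambda>_. 1) = lin_comb a {1..l} v)"
  by (simp add: Mmod_def lin_form_def lin_comb_def lin_term_def)

lemma S_span_zero: "(\<lambda>i. 0) \<in> S_span l G"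
  unfolding S_span_def by (rule CollectI, rule exI[of _ "{}"]) auto

lemma S_span_base: "g \<in> G \<Longrightarrow> g \<in> S_span l G"
  unfolding S_span_def by (rule CollectI, rule exI[of _ "{g}"], rule exI[of _ "\<lambda>_. 1"]) auto

lemma S_span_add:
  assumes "u \<in> S_span l G" "v \<in> S_span l G"
  shows "(\<lambda>i. u i + v i) \<in> S_span l G"
proof -
  obtain F1 c1 where 1: "finite F1" "F1 \<subseteq> G" "\<forall>g\<in>F1. inS l (c1 g)" "u = (\<lambda>i. \<Sum>g\<in>F1. c1 g * g i)"
    using assms(1) unfolding S_span_def by blast
  obtain F2 c2 where 2: "finite F2" "F2 \<subseteq> G" "\<forall>g\<in>F2. inS l (c2 g)" "v = (\<lambda>i. \<Sum>g\<in>F2. c2 g * g i)"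
    using assms(2) unfolding S_span_def by blast
  define c1' where "c1' g = (if g \<in> F1 then c1 g else 0)" for g
  define c2' where "c2' g = (if g \<in> F2 then c2 g else 0)" for g
  have "(\<Sum>g\<in>F1 \<union> F2. c1' g * g i) = (\<Sum>g\<in>F1. c1 g * g i)" for i
    by (rule sum.mono_neutral_cong_right) (use 1 2 in \<open>auto simp: c1'_def\<close>)
  moreover have "(\<Sum>g\<in>F1 \<union> F2. c2' g * g i) = (\<Sum>g\<in>F2. c2 g * g i)" for i
    by (rule sum.mono_neutral_cong_right) (use 1 2 in \<open>auto simp: c2'_def\<close>)
  ultimately have "(\<lambda>i. u i + v i) = (\<lambda>i. \<Sum>g\<in>F1 \<union> F2. (c1' g + c2' g) * g i)"
    by (simp add: 1(4) 2(4) distrib_right sum.distrib)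
  moreover have "\<forall>g\<in>F1 \<union> F2. inS l (c1' g + c2' g)"
    using 1 2 by (auto simp: c1'_def c2'_def intro!: inS_add)
  ultimately show ?thesis
    using 1 2 unfolding S_span_def by (intro CollectI exI[of _ "F1 \<union> F2"] exI[of _ "\<lambda>g. c1' g + c2' g"]) auto
qed

lemma S_span_smult:
  assumes "inS l c" "u \<in> S_span l G"
  shows "(\<lambda>i. c * u i) \<in> S_span l G"
proof -
  obtain F d where F: "finite F" "F \<subseteq> G" "\<forall>g\<in>F. inS l (d g)" "u = (\<lambda>i. \<Sum>g\<in>F. d g * g i)"
    using assms(2) unfolding S_span_def by blast
  then have "(\<lambda>i. c * u i) = (\<lambda>i. \<Sum>g\<in>F. (c * d g) * g i)"
    by (simp add: sum_distrib_left mult.assoc)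
  with F assms(1) show ?thesis
    unfolding S_span_def by (intro CollectI exI[of _ F] exI[of _ "\<lambda>g. c * d g"]) (auto intro: inS_mult)
qed

lemma S_span_sum:
  "finite A \<Longrightarrow> (\<And>x. x \<in> A \<Longrightarrow> f x \<in> S_span l G) \<Longrightarrow> (\<lambda>i. \<Sum>x\<in>A. f x i) \<in> S_span l G"
proof (induction A rule: finite_induct)
  case empty
  then show ?case by (simp add: S_span_zero)
next
  case (insert x A)
  then have "(\<lambda>i. f x i + (\<Sum>y\<in>A. f y i)) \<in> S_span l G"
    using S_span_add[of "f x" l G "\<lambda>i. \<Sum>y\<in>A. f y i"] by blast
  with insert.hyps show ?case by simp
qed

lemma S_span_least:
  assumes "G \<subseteq> M" and "(\<lambda>i. 0) \<in> M"
    and "\<And>u v. u \<in> M \<Longrightarrow> v \<in> M \<Longrightarrow> (\<lambda>i. u i + v i) \<in> M"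
    and "\<And>c u. inS l c \<Longrightarrow> u \<in> M \<Longrightarrow> (\<lambda>i. c * u i) \<in> M"
  shows "S_span l G \<subseteq> M"
proof
  fix v assume "v \<in> S_span l G"
  then obtain F c where F: "finite F" "F \<subseteq> G" "\<forall>g\<in>F. inS l (c g)" "v = (\<lambda>i. \<Sum>g\<in>F. c g * g i)"
    unfolding S_span_def by blast
  have "F \<subseteq> G \<Longrightarrow> \<forall>g\<in>F. inS l (c g) \<Longrightarrow> (\<lambda>i. \<Sum>g\<in>F. c g * g i) \<in> M"
    using F(1)
  proof (induction F rule: finite_induct)
    case (insert g F)
    have "(\<lambda>i. c g * g i) \<in> M"
      using insert.prems by (intro assms(4)) (use assms(1) in auto)
    moreover have "(\<lambda>i. \<Sum>h\<in>F. c h * h i) \<in> M"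
      using insert.prems by (intro insert.IH) auto
    ultimately have "(\<lambda>i. c g * g i + (\<Sum>h\<in>F. c h * h i)) \<in> M"
      by (rule assms(3))
    with insert.hyps show ?case by simp
  qed (use assms(2) in simp)
  with F show "v \<in> M" by blast
qed

section \<open>Syzygies of monomials in distinct variables\<close>

lemma koszul_combination:
  assumes "finite J" "t \<notin> J" "insert t J \<subseteq> {1..l}" "\<forall>i\<in>insert t J. a i \<noteq> 0"
    and "\<And>s. inS l (q s)"
  obtains u where "u \<in> S_span l (Gset l a)" "\<And>i. inS l (u i)" "lin_comb a (insert t J) u = 0"
    "\<And>s. s \<in> J \<Longrightarrow> u s = Var t * q s" "\<And>i. i \<notin> insert t J \<Longrightarrow> u i = 0"
proof
  define u where "u = (\<lambda>i. \<Sum>s\<in>J. (Const (1 / a t) * q s) * koszul a s t i)"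
  show "u \<in> S_span l (Gset l a)"
    unfolding u_def using assms
    by (intro S_span_sum S_span_smult S_span_base koszul_in_Gset inS_mult) auto
  show "inS l (u i)" for i
    unfolding u_def using assms by (intro inS_sum inS_mult inS_koszul) auto
  show "lin_comb a (insert t J) u = 0"
    unfolding u_def lin_comb_sum lin_comb_smult using assms(1,2) by (simp add: lin_comb_koszul)
  show "u i = 0" if "i \<notin> insert t J" for i
    unfolding u_def koszul_def e_std_def using that by (auto intro!: sum.neutral)
  show "u s = Var t * q s" if "s \<in> J" for s
  proof -
    have "s \<noteq> t" using that assms(2) by blast
    then have "u s = Const (1 / a t) * q s * lin_term a t"
      unfolding u_def koszul_def e_std_def using that assms(1)
      by (simp add: if_distrib[of "\<lambda>x. _ * x"] cong: if_cong)
    also have "\<dots> = (Const (1 / a t) * Const (a t)) * q s * Var t"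
      by (simp add: lin_term_def algebra_simps)
    also have "\<dots> = Var t * q s"
      using assms(4) by (simp only: Const_mult) (simp add: Const_def mult.commute)
    finally show ?thesis .
  qed
qed

lemma lin_comb_insert_eq_0_split:
  assumes "finite J" "t \<notin> J" "a t \<noteq> 0" "\<And>i. i \<in> J \<Longrightarrow> t \<notin> vars (w i)"
    and "lin_comb a (insert t J) w = 0"
  shows "lin_comb a J w = 0" and "w t = 0"
proof -
  have "t \<notin> vars (lin_comb a J w)"
  proof
    assume "t \<in> vars (lin_comb a J w)"
    then obtain i where "i \<in> J" "t \<in> vars (w i * lin_term a i)"
      unfolding lin_comb_def using vars_sum by blast
    moreover have "vars (w i * lin_term a i) \<subseteq> vars (w i) \<union> {i}"
      using vars_mult[of "w i" "lin_term a i"] vars_lin_term[of a i] by auto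
    ultimately show False
      using assms(2,4) by auto
  qed
  moreover have "lin_comb a J w + (w t * Const (a t)) * Var t = 0"
    using assms(1,2,5) by (simp add: lin_comb_insert lin_term_def mult.assoc)
  ultimately show "lin_comb a J w = 0"
    by (rule eq_zero_if_free_plus_Var_multiple)
  then show "w t = 0"
    using assms(1,2,5) lin_term_nonzero[of a t, OF assms(3)] by (simp add: lin_comb_insert)
qed

lemma syzygy_in_S_span:
  assumes "finite J" "J \<subseteq> {1..l}" "\<forall>i\<in>J. a i \<noteq> 0"
    and "\<forall>i. i \<notin> J \<longrightarrow> w i = 0" "\<forall>i. inS l (w i)" "lin_comb a J w = 0"
  shows "w \<in> S_span l (Gset l a)"
  using assms
proof (induction J arbitrary: w rule: finite_induct)
  case empty
  then have "w = (\<lambda>i. 0)" by auto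
  then show ?case by (simp add: S_span_zero)
next
  case (insert t J)
  have "\<exists>q r. w i = Var t * q + r \<and> inS l q \<and> inS l r \<and> t \<notin> vars r" for i
  proof -
    have "vars (w i) \<subseteq> {1..l}"
      using insert.prems(4) by (simp add: inS_iff_vars)
    then obtain q r where "w i = Var t * q + r" "vars q \<subseteq> {1..l}" "vars r \<subseteq> {1..l} - {t}"
      by (rule Var_division)
    then show ?thesis by (auto simp: inS_iff_vars)
  qed
  then obtain q r where qr: "\<And>i. w i = Var t * q i + r i" "\<And>i. inS l (q i)"
    "\<And>i. inS l (r i)" "\<And>i. t \<notin> vars (r i)"
    by metis
  obtain u where u: "u \<in> S_span l (Gset l a)" "\<And>i. inS l (u i)"
    "lin_comb a (insert t J) u = 0" "\<And>s. s \<in> J \<Longrightarrow> u s = Var t * q s"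
    "\<And>i. i \<notin> insert t J \<Longrightarrow> u i = 0"
    using koszul_combination[where q = q, OF insert.hyps insert.prems(1,2) qr(2)] by metis
  define w' where "w' = (\<lambda>i. w i - u i)"
  have "lin_comb a (insert t J) w' = 0"
    using insert.prems(5) u(3) by (simp add: w'_def lin_comb_diff)
  moreover have "t \<notin> vars (w' i)" if "i \<in> J" for i
    using that qr(4) by (simp add: w'_def u(4) qr(1))
  moreover have "a t \<noteq> 0"
    using insert.prems(2) by simp
  ultimately have "lin_comb a J w' = 0" "w' t = 0"
    using lin_comb_insert_eq_0_split[OF insert.hyps] by blast+
  moreover have "w' i = 0" if "i \<notin> J" "i \<noteq> t" for i
    using that insert.prems(3) u(5) by (simp add: w'_def)
  moreover have "inS l (w' i)" for i
    using insert.prems(4) u(2) by (simp add: w'_def inS_diff)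
  ultimately have "w' \<in> S_span l (Gset l a)"
    using insert.prems(1,2) by (intro insert.IH) auto
  then have "(\<lambda>i. w' i + u i) \<in> S_span l (Gset l a)"
    using u(1) by (rule S_span_add)
  then show ?case by (simp add: w'_def)
qed

lemma Mmod_zero: "(\<lambda>i. 0) \<in> Mmod l a"
  unfolding Mmod_iff by (auto simp: inSl_def lin_comb_def intro!: exI[of _ 0])

lemma Mmod_add:
  assumes "u \<in> Mmod l a" "v \<in> Mmod l a"
  shows "(\<lambda>i. u i + v i) \<in> Mmod l a"
proof -
  obtain k1 k2 where "inSl l u" "inS l k1" "k1 * lin_comb a {1..l} (\<lambda>_. 1) = lin_comb a {1..l} u"
    "inSl l v" "inS l k2" "k2 * lin_comb a {1..l} (\<lambda>_. 1) = lin_comb a {1..l} v"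
    using assms unfolding Mmod_iff by blast
  then show ?thesis unfolding Mmod_iff
    by (auto simp: inSl_def lin_comb_add distrib_right intro!: inS_add exI[of _ "k1 + k2"])
qed

lemma Mmod_smult:
  assumes "inS l c" "u \<in> Mmod l a"
  shows "(\<lambda>i. c * u i) \<in> Mmod l a"
proof -
  obtain k where "inSl l u" "inS l k" "k * lin_comb a {1..l} (\<lambda>_. 1) = lin_comb a {1..l} u"
    using assms(2) unfolding Mmod_iff by blast
  with assms(1) show ?thesis unfolding Mmod_iff
    by (auto simp: inSl_def lin_comb_smult mult.assoc intro!: inS_mult exI[of _ "c * k"])
qed

lemma Gset_subset_Mmod: "Gset l a \<subseteq> Mmod l a"
proof
  fix g assume "g \<in> Gset l a"
  then consider "g = e_all l" | r where "g = e_std r" "r \<in> {1..l}" "a r = 0"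
    | s t where "g = koszul a s t" "s \<in> {1..l}" "t \<in> {1..l}"
    unfolding Gset_def koszul_def lin_term_def by blast
  then show "g \<in> Mmod l a"
  proof cases
    case 1
    have "lin_comb a {1..l} (e_all l) = lin_comb a {1..l} (\<lambda>_. 1)"
      by (rule lin_comb_cong) (simp add: e_all_def)
    then show ?thesis
      unfolding Mmod_iff 1 by (auto simp: inSl_def e_all_def intro!: exI[of _ 1])
  next
    case 2
    then have "lin_comb a {1..l} (e_std r) = 0"
      by (simp add: lin_comb_e_std lin_term_zero)
    with 2 show ?thesis
      unfolding Mmod_iff by (auto simp: inSl_def e_std_def intro!: exI[of _ 0])
  next
    case 3
    then show ?thesis
      unfolding Mmod_iff by (auto simp: inSl_def inS_koszul lin_comb_koszul intro!: exI[of _ 0])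
        (auto simp: koszul_def e_std_def)
  qed
qed

lemma S_span_subset_Mmod: "S_span l (Gset l a) \<subseteq> Mmod l a"
  by (rule S_span_least[OF Gset_subset_Mmod Mmod_zero Mmod_add Mmod_smult])

lemma Mmod_subset_S_span: "Mmod l a \<subseteq> S_span l (Gset l a)"
proof
  fix v assume "v \<in> Mmod l a"
  then obtain k where v: "inSl l v" "inS l k" "k * lin_comb a {1..l} (\<lambda>_. 1) = lin_comb a {1..l} v"
    unfolding Mmod_iff by blast
  define J where "J = {i\<in>{1..l}. a i \<noteq> 0}"
  define R where "R = {i\<in>{1..l}. a i = 0}"
  define w where "w = (\<lambda>i. if i \<in> J then v i - k else 0)"
  have "lin_comb a J w = lin_comb a {1..l} (\<lambda>i. v i - k)"
    unfolding lin_comb_def w_def J_def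
    by (rule sum.mono_neutral_cong_left) (auto simp: lin_term_zero)
  also have "\<dots> = lin_comb a {1..l} v - k * lin_comb a {1..l} (\<lambda>_. 1)"
    by (simp add: lin_comb_def sum_subtractf sum_distrib_left left_diff_distrib)
  finally have "lin_comb a J w = 0"
    using v(3) by simp
  moreover have "inS l (w i)" for i
    using v(1,2) by (auto simp: w_def J_def inSl_def intro: inS_diff)
  ultimately have w_span: "w \<in> S_span l (Gset l a)"
    by (intro syzygy_in_S_span) (auto simp: J_def w_def)
  have e_span: "(\<lambda>i. k * e_all l i) \<in> S_span l (Gset l a)"
    using v(2) by (intro S_span_smult S_span_base e_all_in_Gset)
  have R_span: "(\<lambda>i. \<Sum>r\<in>R. (v r - k) * e_std r i) \<in> S_span l (Gset l a)"
    using v(1,2) by (intro S_span_sum S_span_smult S_span_base e_std_in_Gset inS_diff)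
      (auto simp: R_def inSl_def)
  have "(\<Sum>r\<in>R. (v r - k) * e_std r i) = (if i \<in> R then v i - k else 0)" for i
    by (simp add: e_std_def R_def if_distrib[of "\<lambda>x. _ * x"] cong: if_cong)
  then have "v = (\<lambda>i. (k * e_all l i + (\<Sum>r\<in>R. (v r - k) * e_std r i)) + w i)"
    using v(1) by (auto simp: e_all_def w_def R_def J_def inSl_def)
  also have "\<dots> \<in> S_span l (Gset l a)"
    by (intro S_span_add e_span R_span w_span)
  finally show "v \<in> S_span l (Gset l a)" .
qed

theorem lemma2p4:
  fixes l :: nat and a :: "nat \<Rightarrow> 'a::field"
  assumes "lin_form l a \<noteq> 0"
  shows "Mmod l a = S_span l (Gset l a)"
  using Mmod_subset_S_span S_span_subset_Mmod by (rule equalityI)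

end
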